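(* Let $G$ be a graph and $v$ a vertex of $G$ with degree $d_v$ in $G$. Let $G+c$ be the graph obtained by attaching to $G$ a new cycle $c$ of length $s_c\geq 3$ which shares only the vertex $v$ with $G$ (all its other vertices and edges are new). Then: (1) If $d_w\geq 2$ for every neighbor $w$ of $v$ in $G$, then \[R(G+c)-R(G)\geq \frac{\sqrt{d_v+2}-\sqrt{d_v}}{\sqrt 2}+\frac{s_c-2}{2},\] with equality if all these $d_w=2$. (2) If $d_v\geq 2$ and $d_w\leq d_v+2$ for every neighbor $w$ of $v$ in $G$, then \[R(G+c)-R(G)\leq \frac{s_c-1}{2},\] with equality if and only if $d_v=2$ and all these $d_w=4$. (3) If $d_v=1$ and the unique neighbor $w$ of $v$ satisfies $2\leq d_w\leq 3$, then \[R(G+c)-R(G)<\frac{s_c-1}{2}+0.075.\]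
   Context: Graphs are finite and simple; degrees $d_w$ refer to degrees in $G$. The Randi\'c index of a graph $H$ is $R(H)=\sum_{uv\in E(H)}\frac{1}{\sqrt{d_ud_v}}$, where degrees are taken in $H$. *)

theory Defs
  imports Complex_Main
begin

definition simple_graph :: "'a set \<Rightarrow> 'a set set \<Rightarrow> bool" where
  "simple_graph V E \<longleftrightarrow> finite V \<and> (\<forall>e\<in>E. \<exists>a b. a \<in> V \<and> b \<in> V \<and> a \<noteq> b \<and> e = {a, b})"

definition deg :: "'a set set \<Rightarrow> 'a \<Rightarrow> nat" where
  "deg E x = card {e \<in> E. x \<in> e}"

definition neighbors :: "'a set set \<Rightarrow> 'a \<Rightarrow> 'a set" where
  "neighbors E v = {w. {v, w} \<in> E}"

definition randic :: "'a set set \<Rightarrow> real" where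
  "randic E = (\<Sum>e\<in>E. 1 / sqrt (\<Prod>x\<in>e. real (deg E x)))"

text \<open>Edges of the cycle v, xs!0, ..., xs!(k-1), v (length k+1).\<close>
definition cycle_edges :: "'a \<Rightarrow> 'a list \<Rightarrow> 'a set set" where
  "cycle_edges v xs = {{(v # xs) ! i, (v # xs) ! (Suc i mod Suc (length xs))} | i. i < Suc (length xs)}"

definition attach_cycle :: "'a set set \<Rightarrow> 'a \<Rightarrow> 'a list \<Rightarrow> 'a set set" where
  "attach_cycle E v xs = E \<union> cycle_edges v xs"

end

theory Submission
  imports Defs
begin

(* Attaching c raises the degree of v by 2, gives the new vertices degree 2 and leaves all other
   degrees unchanged.  Hence only the edges at v and the edges of c contribute to the difference:

     R(G+c) - R(G) = (1/sqrt(d_v+2) - 1/sqrt d_v) * (sum over w ~ v of 1/sqrt d_w)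
                     + 2/sqrt(2(d_v+2)) + (s_c-2)/2,

   the two cycle edges at v having weight 1/sqrt(2(d_v+2)) and the other s_c-2 weight 1/2.
   The first factor is negative, so the difference increases with every d_w, and the bounds
   follow by evaluating at the extreme degrees d_w = 2 and d_w = d_v+2.  In the latter case,
   with b = sqrt(d_v/(d_v+2)), the value is sqrt(1-b^2) + b^2 - b + (s_c-2)/2, and
   sqrt(1-b^2) <= 1/2 + b - b^2 whenever b^2 >= 1/2, i.e. d_v >= 2, with equality only for
   b^2 = 1/2, i.e. d_v = 2.  Part (3) is a numerical check of the two cases d_w = 2, 3. *)

subsection \<open>Degrees and neighborhoods\<close>

lemma deg_eq_0: "\<forall>e\<in>H. x \<notin> e \<Longrightarrow> deg H x = 0"
  unfolding deg_def by (metis (mono_tags, lifting) card.empty empty_Collect_eq)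

lemma simple_graph_edge_subset: "simple_graph V E \<Longrightarrow> e \<in> E \<Longrightarrow> e \<subseteq> V"
  by (auto simp: simple_graph_def)

lemma simple_graph_finite_edges:
  assumes "simple_graph V E"
  shows "finite E"
proof (rule finite_subset)
  show "E \<subseteq> Pow V"
    using simple_graph_edge_subset[OF assms] by blast
  show "finite (Pow V)"
    using assms by (simp add: simple_graph_def)
qed

lemma neighbor_neq:
  assumes "simple_graph V E" "w \<in> neighbors E v"
  shows "w \<noteq> v"
  using assms by (force simp: simple_graph_def neighbors_def doubleton_eq_iff)

lemma neighbors_subset: "simple_graph V E \<Longrightarrow> neighbors E v \<subseteq> V"
  by (auto simp: neighbors_def dest: simple_graph_edge_subset)

lemma finite_neighbors:
  assumes "simple_graph V E"
  shows "finite (neighbors E v)"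
  using finite_subset[OF neighbors_subset[OF assms]] assms by (simp add: simple_graph_def)

lemma edges_at_eq_neighbors:
  assumes "simple_graph V E"
  shows "{e \<in> E. v \<in> e} = (\<lambda>w. {v, w}) ` neighbors E v"
  using assms by (fastforce simp: simple_graph_def neighbors_def insert_commute)

lemma card_neighbors:
  assumes "simple_graph V E"
  shows "card (neighbors E v) = deg E v"
proof -
  have "inj_on (\<lambda>w. {v, w}) (neighbors E v)"
    by (auto simp: inj_on_def doubleton_eq_iff)
  then show ?thesis
    by (simp add: deg_def edges_at_eq_neighbors[OF assms] card_image)
qed

lemma deg_neighbor_pos:
  assumes "simple_graph V E" "w \<in> neighbors E v"
  shows "0 < deg E w"
proof -
  have "{v, w} \<in> {e \<in> E. w \<in> e}"
    using assms(2) by (simp add: neighbors_def)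
  then show ?thesis
    using simple_graph_finite_edges[OF assms(1)]
    by (auto simp: deg_def card_gt_0_iff)
qed

lemma deg_Un_disjoint:
  assumes "finite A" "finite B" "A \<inter> B = {}"
  shows "deg (A \<union> B) x = deg A x + deg B x"
proof -
  have "{e \<in> A \<union> B. x \<in> e} = {e \<in> A. x \<in> e} \<union> {e \<in> B. x \<in> e}"
    by auto
  then show ?thesis
    using assms by (simp add: deg_def card_Un_disjoint disjoint_iff)
qed

subsection \<open>Cycles\<close>

definition cycle_edge :: "'a list \<Rightarrow> nat \<Rightarrow> 'a set" where
  "cycle_edge ys i = {ys ! i, ys ! (Suc i mod length ys)}"

lemma cycle_edges_eq_image: "cycle_edges v xs = cycle_edge (v # xs) ` {..<length (v # xs)}"
  by (auto simp: cycle_edges_def cycle_edge_def)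

lemma Suc_mod_length_less: "i < length ys \<Longrightarrow> Suc i mod length ys < length ys"
  by (intro mod_less_divisor) auto

lemma cycle_edge_subset: "i < length ys \<Longrightarrow> cycle_edge ys i \<subseteq> set ys"
  using Suc_mod_length_less[of i ys] by (simp add: cycle_edge_def)

lemma nth_mem_cycle_edge_iff:
  assumes "distinct ys" "i < length ys" "p < length ys"
  shows "ys ! p \<in> cycle_edge ys i \<longleftrightarrow> p = i \<or> p = Suc i mod length ys"
  using assms Suc_mod_length_less[OF assms(2)] by (auto simp: cycle_edge_def nth_eq_iff_index_eq)

lemma card_cycle_edge:
  assumes "distinct ys" "2 \<le> length ys" "i < length ys"
  shows "card (cycle_edge ys i) = 2"
proof -
  have "i \<noteq> Suc i mod length ys"
    using assms(2,3) by (cases "Suc i = length ys") auto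
  then show ?thesis
    using assms Suc_mod_length_less[OF assms(3)] by (simp add: cycle_edge_def nth_eq_iff_index_eq)
qed

lemma inj_on_cycle_edge:
  assumes "distinct ys" "3 \<le> length ys"
  shows "inj_on (cycle_edge ys) {..<length ys}"
proof (rule inj_onI, rule ccontr)
  fix i j
  let ?n = "length ys"
  assume ij: "i \<in> {..<?n}" "j \<in> {..<?n}" "cycle_edge ys i = cycle_edge ys j" "i \<noteq> j"
  then have "ys ! i \<in> cycle_edge ys j" "ys ! j \<in> cycle_edge ys i"
    by (auto simp: cycle_edge_def)
  with ij have "i = Suc j mod ?n" "j = Suc i mod ?n"
    using assms(1) nth_mem_cycle_edge_iff by auto
  then have "Suc (Suc j) mod ?n = j"
    by (metis mod_Suc_eq)
  moreover have "Suc (Suc j) mod ?n \<noteq> j"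
    using ij(2) assms(2) by (simp add: mod_Suc)
  ultimately show False by contradiction
qed

lemma card_cycle_edges:
  assumes "distinct (v # xs)" "2 \<le> length xs"
  shows "card (cycle_edges v xs) = Suc (length xs)"
  using inj_on_cycle_edge[OF assms(1)] assms(2)
  by (simp add: cycle_edges_eq_image card_image)

lemma cycle_edges_subset:
  assumes "e \<in> cycle_edges v xs"
  shows "e \<subseteq> set (v # xs)"
proof -
  obtain i where "i < length (v # xs)" "e = cycle_edge (v # xs) i"
    using assms by (auto simp: cycle_edges_eq_image)
  then show ?thesis
    using cycle_edge_subset by blast
qed

lemma card_cycle_edges_mem:
  assumes "distinct (v # xs)" "1 \<le> length xs" "e \<in> cycle_edges v xs"
  shows "card e = 2"
  using assms card_cycle_edge[OF assms(1)] by (auto simp: cycle_edges_eq_image)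

lemma deg_cycle_edges:
  assumes "distinct (v # xs)" "2 \<le> length xs"
  shows "deg (cycle_edges v xs) x = (if x \<in> set (v # xs) then 2 else 0)"
proof (cases "x \<in> set (v # xs)")
  case True
  let ?ys = "v # xs" and ?n = "Suc (length xs)"
  obtain p where p: "p < ?n" "x = ?ys ! p"
    using True by (metis in_set_conv_nth length_Cons)
  have pred: "p = Suc i mod ?n \<longleftrightarrow> i = (p + ?n - 1) mod ?n" if "i < ?n" for i
    using that p(1) mod_if by auto
  have "{e \<in> cycle_edges v xs. x \<in> e} = cycle_edge ?ys ` {i \<in> {..<?n}. x \<in> cycle_edge ?ys i}"
    by (auto simp: cycle_edges_eq_image)
  also have "card \<dots> = card {i \<in> {..<?n}. x \<in> cycle_edge ?ys i}"
    using inj_on_cycle_edge[OF assms(1)] assms(2)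
    by (intro card_image) (auto intro: inj_on_subset)
  also have "{i \<in> {..<?n}. x \<in> cycle_edge ?ys i} = {p, (p + ?n - 1) mod ?n}"
    using p assms(1) nth_mem_cycle_edge_iff[of ?ys _ p] pred by auto
  also have "card \<dots> = 2"
    using p(1) assms(2) by (auto simp: mod_if card_insert_if)
  finally show ?thesis
    using True by (simp add: deg_def)
next
  case False
  then show ?thesis
    using cycle_edges_subset[of _ v xs] by (fastforce intro: deg_eq_0)
qed

subsection \<open>The change of the Randic index\<close>

definition randic_weight :: "'a set set \<Rightarrow> 'a set \<Rightarrow> real" where
  "randic_weight H e = 1 / sqrt (\<Prod>x\<in>e. real (deg H x))"

lemma randic_eq_sum_weight: "randic H = (\<Sum>e\<in>H. randic_weight H e)"
  by (simp add: randic_def randic_weight_def)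

lemma randic_weight_doubleton:
  "a \<noteq> b \<Longrightarrow> randic_weight H {a, b} = 1 / sqrt (real (deg H a) * real (deg H b))"
  by (simp add: randic_weight_def)

(* R(G+c) - R(G) - (s_c-2)/2 for a vertex with neighborhood N, hence of degree card N,
   whose neighbors have degrees g *)
definition cycle_gain :: "'a set \<Rightarrow> ('a \<Rightarrow> nat) \<Rightarrow> real" where
  "cycle_gain N g =
     (\<Sum>w\<in>N. 1 / sqrt ((real (card N) + 2) * g w) - 1 / sqrt (real (card N) * g w))
     + 2 / sqrt ((real (card N) + 2) * 2)"

locale cycle_attachment =
  fixes V :: "'a set" and E :: "'a set set" and v :: 'a and xs :: "'a list"
  assumes simple: "simple_graph V E"
    and v_in_V: "v \<in> V"
    and distinct_xs: "distinct xs"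
    and fresh: "set xs \<inter> V = {}"
    and long: "2 \<le> length xs"
begin

lemma distinct_cycle: "distinct (v # xs)"
  using distinct_xs fresh v_in_V by auto

lemma edges_disjoint_cycle_edges: "E \<inter> cycle_edges v xs = {}"
proof -
  have "\<not> e \<subseteq> V" if "e \<in> cycle_edges v xs" for e
  proof
    assume "e \<subseteq> V"
    with that have "e \<subseteq> {v}"
      using cycle_edges_subset fresh by fastforce
    then have "card e \<le> 1"
      by (simp add: card_mono[of "{v}", simplified])
    with that show False
      using card_cycle_edges_mem[OF distinct_cycle] long by fastforce
  qed
  then show ?thesis
    using simple_graph_edge_subset[OF simple] by blast
qed

lemma deg_attach_cycle:
  "deg (attach_cycle E v xs) x = deg E x + (if x \<in> set (v # xs) then 2 else 0)"
  using deg_Un_disjoint[OF simple_graph_finite_edges[OF simple] _ edges_disjoint_cycle_edges]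
    deg_cycle_edges[OF distinct_cycle long]
  by (simp add: attach_cycle_def cycle_edges_eq_image)

lemma deg_attach_cycle_old:
  "x \<in> V \<Longrightarrow> x \<noteq> v \<Longrightarrow> deg (attach_cycle E v xs) x = deg E x"
  using deg_attach_cycle fresh by auto

lemma deg_attach_cycle_new: "x \<in> set xs \<Longrightarrow> deg (attach_cycle E v xs) x = 2"
proof -
  assume x: "x \<in> set xs"
  then have "\<forall>e\<in>E. x \<notin> e"
    using fresh simple_graph_edge_subset[OF simple] by blast
  then have "deg E x = 0"
    by (rule deg_eq_0)
  then show ?thesis
    using deg_attach_cycle x by simp
qed

lemma deg_attach_cycle_center: "deg (attach_cycle E v xs) v = deg E v + 2"
  using deg_attach_cycle by simp

lemma randic_weight_old_edges:
  "(\<Sum>e\<in>E. randic_weight (attach_cycle E v xs) e - randic_weight E e)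
   = (\<Sum>w\<in>neighbors E v. 1 / sqrt ((real (deg E v) + 2) * deg E w)
                          - 1 / sqrt (real (deg E v) * deg E w))"
proof -
  let ?G = "attach_cycle E v xs" and ?N = "neighbors E v"
  have unchanged: "randic_weight ?G e = randic_weight E e" if "e \<in> E" "v \<notin> e" for e
  proof -
    have "\<forall>x\<in>e. deg ?G x = deg E x"
      using that simple_graph_edge_subset[OF simple] deg_attach_cycle_old by blast
    then show ?thesis
      by (simp add: randic_weight_def)
  qed
  have "(\<Sum>e\<in>E. randic_weight ?G e - randic_weight E e)
      = (\<Sum>e\<in>{e \<in> E. v \<in> e}. randic_weight ?G e - randic_weight E e)"
    using simple_graph_finite_edges[OF simple] unchanged by (intro sum.mono_neutral_right) auto
  also have "\<dots> = (\<Sum>w\<in>?N. randic_weight ?G {v, w} - randic_weight E {v, w})"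
    unfolding edges_at_eq_neighbors[OF simple]
    by (rule sum.reindex_cong[where l = "\<lambda>w. {v, w}"]) (auto simp: inj_on_def doubleton_eq_iff)
  also have "\<dots> = (\<Sum>w\<in>?N. 1 / sqrt ((real (deg E v) + 2) * deg E w)
                          - 1 / sqrt (real (deg E v) * deg E w))"
  proof (rule sum.cong[OF refl])
    fix w assume "w \<in> ?N"
    then have "w \<noteq> v" "w \<in> V"
      using neighbor_neq[OF simple] neighbors_subset[OF simple] by auto
    then show "randic_weight ?G {v, w} - randic_weight E {v, w}
             = 1 / sqrt ((real (deg E v) + 2) * deg E w) - 1 / sqrt (real (deg E v) * deg E w)"
      by (simp add: randic_weight_doubleton deg_attach_cycle_old deg_attach_cycle_center)
  qed
  finally show ?thesis .
qed

lemma cycle_edge_at_center: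
  assumes "e \<in> cycle_edges v xs" "v \<in> e"
  obtains x where "e = {v, x}" "x \<in> set xs"
proof -
  have "card e = 2"
    using card_cycle_edges_mem[OF distinct_cycle _ assms(1)] long by simp
  then obtain a b where "e = {a, b}" "a \<noteq> b"
    unfolding card_2_iff by blast
  then obtain x where "e = {v, x}" "x \<noteq> v"
    using assms(2) by (auto simp: insert_commute)
  moreover have "x \<in> set xs"
    using cycle_edges_subset[OF assms(1)] calculation by auto
  ultimately show ?thesis
    using that by blast
qed

lemma randic_weight_cycle_edge_at_center:
  assumes "e \<in> cycle_edges v xs" "v \<in> e"
  shows "randic_weight (attach_cycle E v xs) e = 1 / sqrt ((real (deg E v) + 2) * 2)"
proof -
  obtain x where "e = {v, x}" "x \<in> set xs"
    using cycle_edge_at_center[OF assms] .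
  moreover have "x \<noteq> v"
    using distinct_cycle \<open>x \<in> set xs\<close> by auto
  ultimately show ?thesis
    by (simp add: randic_weight_doubleton deg_attach_cycle_center deg_attach_cycle_new)
qed

lemma randic_weight_cycle_edge_off_center:
  assumes "e \<in> cycle_edges v xs" "v \<notin> e"
  shows "randic_weight (attach_cycle E v xs) e = 1 / 2"
proof -
  have "e \<subseteq> set xs" "card e = 2"
    using assms cycle_edges_subset[OF assms(1)] card_cycle_edges_mem[OF distinct_cycle _ assms(1)] long
    by auto
  then have "(\<Prod>x\<in>e. real (deg (attach_cycle E v xs) x)) = (\<Prod>x\<in>e. 2)"
    using deg_attach_cycle_new by (intro prod.cong) auto
  with \<open>card e = 2\<close> show ?thesis
    by (simp add: randic_weight_def)
qed

lemma randic_weight_cycle_edges: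
  "(\<Sum>e\<in>cycle_edges v xs. randic_weight (attach_cycle E v xs) e)
   = 2 / sqrt ((real (deg E v) + 2) * 2) + (real (length xs) - 1) / 2"
proof -
  let ?G = "attach_cycle E v xs" and ?C = "cycle_edges v xs"
  let ?at_v = "?C \<inter> {e. v \<in> e}" and ?off_v = "?C - {e. v \<in> e}"
  have "card ?at_v = 2"
    using deg_cycle_edges[OF distinct_cycle long, of v] by (simp add: deg_def Collect_conj_eq)
  moreover have "card ?off_v = length xs - 1"
    using card_cycle_edges[OF distinct_cycle long] \<open>card ?at_v = 2\<close>
    by (simp add: card_Diff_subset_Int cycle_edges_eq_image)
  moreover have "(\<Sum>e\<in>?C. randic_weight ?G e)
      = (\<Sum>e\<in>?at_v. randic_weight ?G e) + (\<Sum>e\<in>?off_v. randic_weight ?G e)"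
    by (rule sum.Int_Diff) (simp add: cycle_edges_eq_image)
  ultimately show ?thesis
    using long
    by (simp add: randic_weight_cycle_edge_at_center randic_weight_cycle_edge_off_center of_nat_diff)
qed

lemma randic_attach_cycle:
  "randic (attach_cycle E v xs) - randic E
   = cycle_gain (neighbors E v) (deg E) + (real (length xs) - 1) / 2"
proof -
  let ?G = "attach_cycle E v xs"
  have "randic ?G = (\<Sum>e\<in>E. randic_weight ?G e) + (\<Sum>e\<in>cycle_edges v xs. randic_weight ?G e)"
    unfolding randic_eq_sum_weight attach_cycle_def
    using simple_graph_finite_edges[OF simple] edges_disjoint_cycle_edges
    by (intro sum.union_disjoint) (auto simp: cycle_edges_eq_image)
  then have "randic ?G - randic E
      = (\<Sum>e\<in>E. randic_weight ?G e - randic_weight E e)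
        + (\<Sum>e\<in>cycle_edges v xs. randic_weight ?G e)"
    by (simp add: randic_eq_sum_weight[of E] sum_subtractf)
  then show ?thesis
    by (simp add: randic_weight_old_edges randic_weight_cycle_edges cycle_gain_def
        card_neighbors[OF simple])
qed

end

subsection \<open>Estimates for the gain\<close>

lemma cycle_gain_cong: "(\<And>w. w \<in> N \<Longrightarrow> g w = h w) \<Longrightarrow> cycle_gain N g = cycle_gain N h"
  by (simp add: cycle_gain_def)

lemma inverse_sqrt_le: "0 < x \<Longrightarrow> x \<le> y \<Longrightarrow> 1 / sqrt y \<le> 1 / sqrt (x::real)"
  by (simp add: divide_left_mono)

lemma inverse_sqrt_less: "0 < x \<Longrightarrow> x < y \<Longrightarrow> 1 / sqrt y < 1 / sqrt (x::real)"
  by (simp add: divide_strict_left_mono)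

lemma inverse_sqrt_mult_diff:
  fixes d g :: real
  shows "1 / sqrt ((d + 2) * g) - 1 / sqrt (d * g) = (1 / sqrt (d + 2) - 1 / sqrt d) / sqrt g"
  by (simp add: real_sqrt_mult diff_divide_distrib)

lemma cycle_gain_eq:
  "cycle_gain N g = (1 / sqrt (real (card N) + 2) - 1 / sqrt (card N)) * (\<Sum>w\<in>N. 1 / sqrt (g w))
                    + 2 / sqrt ((real (card N) + 2) * 2)"
  by (simp add: cycle_gain_def inverse_sqrt_mult_diff sum_distrib_left)

lemma cycle_gain_diff:
  "cycle_gain N h - cycle_gain N g
   = (1 / sqrt (card N) - 1 / sqrt (real (card N) + 2)) * (\<Sum>w\<in>N. 1 / sqrt (g w) - 1 / sqrt (h w))"
  by (simp add: cycle_gain_eq sum_subtractf algebra_simps)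

lemma cycle_gain_mono:
  assumes "finite N" "\<forall>w\<in>N. 0 < g w \<and> g w \<le> h w"
  shows "cycle_gain N g \<le> cycle_gain N h"
proof (cases "N = {}")
  case True
  then show ?thesis by (simp add: cycle_gain_def)
next
  case False
  then have "1 / sqrt (real (card N) + 2) \<le> 1 / sqrt (card N)"
    using assms(1) by (intro inverse_sqrt_le) (auto simp: card_gt_0_iff)
  moreover have "0 \<le> (\<Sum>w\<in>N. 1 / sqrt (g w) - 1 / sqrt (h w))"
    using assms(2) by (intro sum_nonneg) (simp add: inverse_sqrt_le)
  ultimately have "0 \<le> cycle_gain N h - cycle_gain N g"
    unfolding cycle_gain_diff by (intro mult_nonneg_nonneg) simp_all
  then show ?thesis by simp
qed

lemma cycle_gain_strict_mono:
  assumes "finite N" "\<forall>w\<in>N. 0 < g w \<and> g w \<le> h w" "\<exists>w\<in>N. g w < h w"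
  shows "cycle_gain N g < cycle_gain N h"
proof -
  obtain u where u: "u \<in> N" "g u < h u"
    using assms(3) by blast
  then have "1 / sqrt (real (card N) + 2) < 1 / sqrt (card N)"
    using assms(1) by (intro inverse_sqrt_less) (auto simp: card_gt_0_iff)
  moreover have "0 < (\<Sum>w\<in>N. 1 / sqrt (g w) - 1 / sqrt (h w))"
    using assms(1,2) u by (intro sum_pos2[where i = u]) (auto simp: inverse_sqrt_le inverse_sqrt_less)
  ultimately have "0 < cycle_gain N h - cycle_gain N g"
    unfolding cycle_gain_diff by (intro mult_pos_pos) simp_all
  then show ?thesis by simp
qed

lemma cycle_gain_const_2:
  "cycle_gain N (\<lambda>_. 2) = (sqrt (real (card N) + 2) - sqrt (card N)) / sqrt 2"
proof -
  define a b where "a = sqrt (real (card N) + 2)" and "b = sqrt (card N)"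
  have a: "0 < a" "a\<^sup>2 = real (card N) + 2" and b: "b\<^sup>2 = real (card N)"
    by (simp_all add: a_def b_def)
  have "sqrt ((real (card N) + 2) * 2) = a * sqrt 2"
    by (simp only: a_def real_sqrt_mult)
  then have "cycle_gain N (\<lambda>_. 2) = (b\<^sup>2 * (1 / a - 1 / b) + 2 / a) / sqrt 2"
    unfolding cycle_gain_eq by (simp add: a_def b_def add_divide_distrib)
  also have "b\<^sup>2 * (1 / a - 1 / b) + 2 / a = a\<^sup>2 / a - b\<^sup>2 / b"
    using a b by (simp add: field_simps)
  also have "\<dots> = a - b"
    by (simp add: power2_eq_square)
  finally show ?thesis
    by (simp add: a_def b_def)
qed

lemma cycle_gain_ge:
  assumes "finite N" "\<forall>w\<in>N. 2 \<le> g w"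
  shows "(sqrt (real (card N) + 2) - sqrt (card N)) / sqrt 2 \<le> cycle_gain N g"
  using cycle_gain_mono[of N "\<lambda>_. 2" g] assms by (simp add: cycle_gain_const_2)

lemma sqrt_one_minus_square_le:
  fixes b :: real
  assumes "0 \<le> b" "b \<le> 1" "1 / 2 \<le> b\<^sup>2"
  shows "sqrt (1 - b\<^sup>2) \<le> 1 / 2 + b - b\<^sup>2"
    and "1 / 2 < b\<^sup>2 \<Longrightarrow> sqrt (1 - b\<^sup>2) < 1 / 2 + b - b\<^sup>2"
proof -
  have nonneg: "0 \<le> 1 / 2 + b - b\<^sup>2"
    using mult_nonneg_nonneg[of b "1 - b"] assms(1,2) by (simp add: power2_eq_square algebra_simps)
  have key: "(1 / 2 + b - b\<^sup>2)\<^sup>2 - (1 - b\<^sup>2) = (b\<^sup>2 - 1 / 2) * ((b - 1)\<^sup>2 + 1 / 2)"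
    by (simp add: power2_eq_square algebra_simps)
  have pos: "0 < (b - 1)\<^sup>2 + 1 / 2"
    by (simp add: add_nonneg_pos)
  have "0 \<le> (b\<^sup>2 - 1 / 2) * ((b - 1)\<^sup>2 + 1 / 2)"
    using assms(3) pos by simp
  then show "sqrt (1 - b\<^sup>2) \<le> 1 / 2 + b - b\<^sup>2"
    using key nonneg by (intro real_le_lsqrt) simp_all
  assume "1 / 2 < b\<^sup>2"
  then have "0 < (b\<^sup>2 - 1 / 2) * ((b - 1)\<^sup>2 + 1 / 2)"
    using pos by simp
  then show "sqrt (1 - b\<^sup>2) < 1 / 2 + b - b\<^sup>2"
    using key nonneg by (intro real_less_lsqrt) simp_all
qed

lemma cycle_gain_const_top:
  assumes "0 < card N"
  defines "\<beta> \<equiv> sqrt (card N) / sqrt (real (card N) + 2)"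
  shows "cycle_gain N (\<lambda>_. card N + 2) = sqrt (1 - \<beta>\<^sup>2) + \<beta>\<^sup>2 - \<beta>"
proof -
  define d where "d = real (card N)"
  define a b where "a = sqrt (d + 2)" and "b = sqrt d"
  have d: "0 < d" using assms(1) by (simp add: d_def)
  have a: "0 < a" "a\<^sup>2 = d + 2" and b: "0 < b" "b\<^sup>2 = d"
    using d by (simp_all add: a_def b_def)
  have \<beta>: "\<beta> = b / a"
    by (simp add: \<beta>_def a_def b_def d_def)
  have "1 - \<beta>\<^sup>2 = (sqrt 2 / a)\<^sup>2"
    using a b d by (simp add: \<beta> power_divide field_simps)
  then have "sqrt (1 - \<beta>\<^sup>2) = sqrt 2 / a"
    using a(1) by simp
  moreover have "sqrt ((d + 2) * 2) = a * sqrt 2"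
    by (simp only: a_def real_sqrt_mult)
  then have "2 / sqrt ((d + 2) * 2) = sqrt 2 / a"
    using a(1) by (simp add: field_simps)
  then have "cycle_gain N (\<lambda>_. card N + 2) = (1 / a - 1 / b) * (b\<^sup>2 / a) + sqrt 2 / a"
    unfolding cycle_gain_eq by (simp add: a_def b_def d_def add.commute)
  moreover have "(1 / a - 1 / b) * (b\<^sup>2 / a) = (b / a)\<^sup>2 - b / a"
    using a(1) b(1) by (simp add: power2_eq_square field_simps)
  ultimately show ?thesis
    by (simp add: \<beta>)
qed

lemma cycle_gain_const_top_le:
  assumes "2 \<le> card N"
  shows "cycle_gain N (\<lambda>_. card N + 2) \<le> 1 / 2"
    and "cycle_gain N (\<lambda>_. card N + 2) = 1 / 2 \<longleftrightarrow> card N = 2"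
proof -
  define \<beta> where "\<beta> = sqrt (card N) / sqrt (real (card N) + 2)"
  have top: "cycle_gain N (\<lambda>_. card N + 2) = sqrt (1 - \<beta>\<^sup>2) + \<beta>\<^sup>2 - \<beta>"
    using cycle_gain_const_top[of N] assms unfolding \<beta>_def by fastforce
  have \<beta>2: "\<beta>\<^sup>2 = card N / (real (card N) + 2)"
    by (simp add: \<beta>_def power_divide)
  have \<beta>: "0 \<le> \<beta>" "\<beta> \<le> 1" "1 / 2 \<le> \<beta>\<^sup>2"
    using assms by (simp_all add: \<beta>_def \<beta>2 field_simps)
  show "cycle_gain N (\<lambda>_. card N + 2) \<le> 1 / 2"
    using sqrt_one_minus_square_le(1)[OF \<beta>] top by linarith
  show "cycle_gain N (\<lambda>_. card N + 2) = 1 / 2 \<longleftrightarrow> card N = 2"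
  proof
    assume "card N = 2"
    then have "1 - \<beta>\<^sup>2 = \<beta>\<^sup>2"
      by (simp add: \<beta>2)
    then have "sqrt (1 - \<beta>\<^sup>2) = \<beta>"
      using \<beta>(1) by (simp only: real_sqrt_abs abs_of_nonneg)
    then show "cycle_gain N (\<lambda>_. card N + 2) = 1 / 2"
      unfolding top using \<open>card N = 2\<close> by (simp add: \<beta>2)
  next
    assume "cycle_gain N (\<lambda>_. card N + 2) = 1 / 2"
    then have "\<not> 1 / 2 < \<beta>\<^sup>2"
      using sqrt_one_minus_square_le(2)[OF \<beta>] top by linarith
    then show "card N = 2"
      using assms by (simp add: \<beta>2 field_simps)
  qed
qed

lemma cycle_gain_le_half:
  assumes "2 \<le> card N" "\<forall>w\<in>N. 0 < g w \<and> g w \<le> card N + 2"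
  shows "cycle_gain N g \<le> 1 / 2"
    and "cycle_gain N g = 1 / 2 \<longleftrightarrow> card N = 2 \<and> (\<forall>w\<in>N. g w = 4)"
proof -
  let ?top = "cycle_gain N (\<lambda>_. card N + 2)"
  have fin: "finite N"
    using assms(1) by (cases "finite N") auto
  have le_top: "cycle_gain N g \<le> ?top"
    using cycle_gain_mono[of N g "\<lambda>_. card N + 2"] fin assms(2) by simp
  then show "cycle_gain N g \<le> 1 / 2"
    using cycle_gain_const_top_le(1)[OF assms(1)] by linarith
  show "cycle_gain N g = 1 / 2 \<longleftrightarrow> card N = 2 \<and> (\<forall>w\<in>N. g w = 4)"
  proof
    assume half: "cycle_gain N g = 1 / 2"
    have extremal: "\<forall>w\<in>N. g w = card N + 2"
    proof (rule ccontr)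
      assume "\<not> (\<forall>w\<in>N. g w = card N + 2)"
      then have "\<exists>w\<in>N. g w < card N + 2"
        using assms(2) le_neq_implies_less by blast
      then have "cycle_gain N g < ?top"
        using cycle_gain_strict_mono[of N g "\<lambda>_. card N + 2"] fin assms(2) by simp
      with half show False
        using cycle_gain_const_top_le(1)[OF assms(1)] by linarith
    qed
    then have "cycle_gain N g = ?top"
      by (intro cycle_gain_cong) simp
    with half have "card N = 2"
      using cycle_gain_const_top_le(2)[OF assms(1)] by simp
    with extremal show "card N = 2 \<and> (\<forall>w\<in>N. g w = 4)"
      by simp
  next
    assume extremal: "card N = 2 \<and> (\<forall>w\<in>N. g w = 4)"
    then have "cycle_gain N g = ?top"
      by (intro cycle_gain_cong) simp
    also have "\<dots> = 1 / 2"
      using cycle_gain_const_top_le(2)[OF assms(1)] extremal by blast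
    finally show "cycle_gain N g = 1 / 2" .
  qed
qed

lemma cycle_gain_singleton_less:
  assumes "2 \<le> g w" "g w \<le> 3"
  shows "cycle_gain {w} g < 1 / 2 + 0.075"
proof -
  have gain: "cycle_gain {w} g = 1 / sqrt (3 * g w) - 1 / sqrt (g w) + 2 / sqrt 6"
    by (simp add: cycle_gain_def)
  have s6: "2449 / 1000 < sqrt 6"
    by (rule real_less_rsqrt) (simp add: power2_eq_square)
  have s3: "sqrt 3 < 17321 / 10000" and s2: "sqrt 2 < 14143 / 10000"
    by (rule real_less_lsqrt; simp add: power2_eq_square)+
  have b6: "1 / sqrt 6 < 1000 / 2449"
    using s6 by (simp add: field_simps)
  have b3: "10000 / 17321 < 1 / sqrt 3"
    using s3 by (simp add: field_simps)
  have b2: "10000 / 14143 < 1 / sqrt 2"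
    using s2 by (simp add: field_simps)
  have target: "1 / 2 + 0.075 = (23 / 40 :: real)"
    by simp
  consider "g w = 2" | "g w = 3"
    using assms by linarith
  then show ?thesis
  proof cases
    case 1
    then have "cycle_gain {w} g = 3 * (1 / sqrt 6) - 1 / sqrt 2"
      by (simp add: gain)
    with b6 b2 target show ?thesis by linarith
  next
    case 2
    then have "cycle_gain {w} g = 1 / 3 - 1 / sqrt 3 + 2 * (1 / sqrt 6)"
      by (simp add: gain)
    with b6 b3 target show ?thesis by linarith
  qed
qed

theorem lemma2p7:
  fixes V :: "'a set" and E :: "'a set set" and v :: 'a and xs :: "'a list"
  assumes G: "simple_graph V E"
    and vV: "v \<in> V"
    and new: "distinct xs" "set xs \<inter> V = {}"
    and len: "length xs + 1 \<ge> 3"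
  defines "s \<equiv> real (length xs + 1)"
    and "Gc \<equiv> attach_cycle E v xs"
    and "dv \<equiv> real (deg E v)"
  shows
   "((\<forall>w\<in>neighbors E v. deg E w \<ge> 2) \<longrightarrow>
       randic Gc - randic E \<ge> (sqrt (dv + 2) - sqrt dv) / sqrt 2 + (s - 2) / 2 \<and>
       ((\<forall>w\<in>neighbors E v. deg E w = 2) \<longrightarrow>
          randic Gc - randic E = (sqrt (dv + 2) - sqrt dv) / sqrt 2 + (s - 2) / 2))
    \<and>
    ((deg E v \<ge> 2 \<and> (\<forall>w\<in>neighbors E v. deg E w \<le> deg E v + 2)) \<longrightarrow>
       randic Gc - randic E \<le> (s - 1) / 2 \<and>
       (randic Gc - randic E = (s - 1) / 2 \<longleftrightarrow>
          deg E v = 2 \<and> (\<forall>w\<in>neighbors E v. deg E w = 4)))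
    \<and>
    (\<forall>w. deg E v = 1 \<and> w \<in> neighbors E v \<and> 2 \<le> deg E w \<and> deg E w \<le> 3 \<longrightarrow>
       randic Gc - randic E < (s - 1) / 2 + 0.075)"
proof -
  interpret cycle_attachment V E v xs
    using G vV new len by unfold_locales simp_all
  let ?N = "neighbors E v"
  have gain: "randic Gc - randic E = cycle_gain ?N (deg E) + (s - 2) / 2"
    using randic_attach_cycle by (simp add: Gc_def s_def)
  have card: "card ?N = deg E v" and fin: "finite ?N"
    using card_neighbors[OF G] finite_neighbors[OF G] .
  have lower: "(sqrt (dv + 2) - sqrt dv) / sqrt 2 \<le> cycle_gain ?N (deg E)"
    if "\<forall>w\<in>?N. 2 \<le> deg E w"
    using cycle_gain_ge[OF fin that] by (simp add: dv_def card)
  have lower_eq: "cycle_gain ?N (deg E) = (sqrt (dv + 2) - sqrt dv) / sqrt 2"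
    if "\<forall>w\<in>?N. deg E w = 2"
    using cycle_gain_cong[of ?N "deg E" "\<lambda>_. 2"] that by (simp add: cycle_gain_const_2 dv_def card)
  have upper: "cycle_gain ?N (deg E) \<le> 1 / 2"
      "cycle_gain ?N (deg E) = 1 / 2 \<longleftrightarrow> deg E v = 2 \<and> (\<forall>w\<in>?N. deg E w = 4)"
    if "2 \<le> deg E v" "\<forall>w\<in>?N. deg E w \<le> deg E v + 2"
  proof -
    have "2 \<le> card ?N" "\<forall>w\<in>?N. 0 < deg E w \<and> deg E w \<le> card ?N + 2"
      using that deg_neighbor_pos[OF G] card by (simp, fastforce)
    from cycle_gain_le_half[OF this] card
    show "cycle_gain ?N (deg E) \<le> 1 / 2"
      "cycle_gain ?N (deg E) = 1 / 2 \<longleftrightarrow> deg E v = 2 \<and> (\<forall>w\<in>?N. deg E w = 4)"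
      by simp_all
  qed
  have pendant: "cycle_gain ?N (deg E) < 1 / 2 + 0.075"
    if "deg E v = 1" "w \<in> ?N" "2 \<le> deg E w" "deg E w \<le> 3" for w
  proof -
    have "?N = {w}"
      using that(1,2) card by (auto simp: card_1_singleton_iff)
    then show ?thesis
      using cycle_gain_singleton_less[of "deg E" w] that(3,4) by simp
  qed
  have shift: "(s - 1) / 2 = 1 / 2 + (s - 2) / 2"
    by (simp add: field_simps)
  show ?thesis
    unfolding gain shift using lower lower_eq upper pendant by (simp add: add.assoc) blast
qed

end
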